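(* Fix a slope bound $s\ge0$, and let $\alpha=(a_1,\dots,a_w)$. Let $a_i,a_j\in\mathbb{L}^{t+1}_\alpha$ with $i<j$, and suppose $a_k\in\mathbb{L}^t_\alpha$ is the leftmost slope-proper predecessor of $a_i$. Then every slope-proper predecessor of $a_j$ is either $a_k$ or lies to the right of $a_k$ in $\mathbb{L}^t_\alpha$. In particular, the leftmost slope-proper predecessor of $a_j$, if it exists, is $a_k$ or an item to the right of $a_k$.
   Context: Let $\alpha=(a_1,\dots,a_w)$ be a finite sequence of real numbers, with items identified by their positions. Increasing subsequences are non-strict. $a_j$ is compatible with $a_i$ if $j<i$ and $a_j\le a_i$. $RL_\alpha(a)$ is the maximum length of an increasing subsequence ending at $a$. $a_j$ is a predecessor of $a_i$ if it is compatible with $a_i$ and $RL_\alpha(a_j)=RL_\alpha(a_i)-1$. The horizontal list $\mathbb{L}^t_\alpha$ is the list of items of rising length $t$, ordered by position; "left of" means earlier position. Items are colored black or non-black recursively by level: all items of $\mathbb{L}^1_\alpha$ are non-black, and an item $a_i\in\mathbb{L}^{t+1}_\alpha$ is non-black iff it has a slope-proper predecessor. Here a slope-proper predecessor of $a_i$ is a non-black predecessor $a_k$ of $a_i$ with $(a_i-a_k)/(i-k)\ge s$. *)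

theory Defs
  imports Complex_Main
begin

(* Sequence alpha = (a_1,...,a_w) is represented by a list  a :: real list;
   item a_i is identified by its (0-based) position i < length a.
   Only differences of positions enter the definitions, so 0- vs 1-based
   indexing is immaterial. *)

definition compatible :: "real list \<Rightarrow> nat \<Rightarrow> nat \<Rightarrow> bool" where
  "compatible a j i \<longleftrightarrow> j < i \<and> i < length a \<and> a ! j \<le> a ! i"

definition inc_subseq_ending :: "real list \<Rightarrow> nat list \<Rightarrow> nat \<Rightarrow> bool" where
  "inc_subseq_ending a js i \<longleftrightarrow>
     js \<noteq> [] \<and> last js = i \<and> sorted_wrt (<) js \<and> (\<forall>p\<in>set js. p < length a) \<and>
     sorted_wrt (\<le>) (map (\<lambda>p. a ! p) js)"

definition RL :: "real list \<Rightarrow> nat \<Rightarrow> nat" where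
  "RL a i = Max {length js | js. inc_subseq_ending a js i}"

definition predecessor :: "real list \<Rightarrow> nat \<Rightarrow> nat \<Rightarrow> bool" where
  "predecessor a j i \<longleftrightarrow> compatible a j i \<and> RL a j = RL a i - 1"

(* horizontal list L^t_alpha (as a set of positions, ordered by position) *)
definition hlist :: "real list \<Rightarrow> nat \<Rightarrow> nat set" where
  "hlist a t = {i. i < length a \<and> RL a i = t}"

(* non-black items, defined level by level (well-founded: predecessors lie
   at strictly smaller positions and levels) *)
inductive nonblack :: "real \<Rightarrow> real list \<Rightarrow> nat \<Rightarrow> bool" for s a where
  level1: "i < length a \<Longrightarrow> RL a i = 1 \<Longrightarrow> nonblack s a i"
| step: "RL a i \<ge> 2 \<Longrightarrow> predecessor a k i \<Longrightarrow> nonblack s a k \<Longrightarrow>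
         (a ! i - a ! k) / (real i - real k) \<ge> s \<Longrightarrow> nonblack s a i"

definition slope_proper_pred :: "real \<Rightarrow> real list \<Rightarrow> nat \<Rightarrow> nat \<Rightarrow> bool" where
  "slope_proper_pred s a k i \<longleftrightarrow>
     predecessor a k i \<and> nonblack s a k \<and> (a ! i - a ! k) / (real i - real k) \<ge> s"

end

theory Submission
  imports Defs
begin

text \<open>
  Two items of the same level strictly decrease from left to right, for otherwise the right one
  would extend every increasing subsequence ending at the left one. So if i < j lie on level t + 1
  and k' < i is a slope-proper predecessor of a_j, then a_k' \<le> a_j < a_i: the item a_k' is
  compatible with a_i, and the chord from a_k' to a_i is shorter and rises more than the chord to
  a_j, hence at least as steep. Thus a_k' is also a slope-proper predecessor of a_i and cannot lie
  left of the leftmost one.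
\<close>

lemma inc_subseq_ending_length_le:
  assumes "inc_subseq_ending a js p"
  shows "length js \<le> length a"
proof -
  have "distinct js" "set js \<subseteq> {..<length a}"
    using assms strict_sorted_iff unfolding inc_subseq_ending_def by auto
  then show ?thesis
    by (metis card_lessThan card_mono distinct_card finite_lessThan)
qed

lemma finite_rising_lengths: "finite {length js | js. inc_subseq_ending a js p}"
  by (rule finite_subset[of _ "{..length a}"]) (auto dest: inc_subseq_ending_length_le)

lemma length_le_RL:
  assumes "inc_subseq_ending a js p"
  shows "length js \<le> RL a p"
  unfolding RL_def using assms finite_rising_lengths by (intro Max_ge) auto

lemma RL_attained:
  assumes "p < length a"
  obtains js where "inc_subseq_ending a js p" "length js = RL a p"
proof -
  have "inc_subseq_ending a [p] p"
    using assms unfolding inc_subseq_ending_def by simp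
  then have "RL a p \<in> {length js | js. inc_subseq_ending a js p}"
    unfolding RL_def using finite_rising_lengths by (intro Max_in) auto
  then obtain js where "inc_subseq_ending a js p" "RL a p = length js"
    by blast
  with that show ?thesis by simp
qed

lemma RL_strict_mono:
  assumes "compatible a p q"
  shows "RL a p < RL a q"
proof -
  have pq: "p < q" "q < length a" "a ! p \<le> a ! q"
    using assms unfolding compatible_def by auto
  obtain js where js: "inc_subseq_ending a js p" "length js = RL a p"
    using RL_attained[of p a] pq by force
  then obtain ys where ys: "js = ys @ [p]"
    unfolding inc_subseq_ending_def by (metis append_butlast_last_id)
  have "inc_subseq_ending a (js @ [q]) q"
    using js(1) pq unfolding ys inc_subseq_ending_def by (auto simp: sorted_wrt_append)
  then have "length (js @ [q]) \<le> RL a q"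
    by (rule length_le_RL)
  with js(2) show ?thesis by simp
qed

lemma same_level_decreasing:
  assumes "i < j" "j < length a" "RL a i = RL a j"
  shows "a ! j < a ! i"
proof (rule ccontr)
  assume "\<not> a ! j < a ! i"
  then have "compatible a i j"
    using assms unfolding compatible_def by simp
  with assms(3) show False
    using RL_strict_mono by fastforce
qed

lemma chord_slope_le:
  fixes x y z d e :: real
  assumes "x \<le> y" "y \<le> z" "0 < d" "d \<le> e"
  shows "(y - x) / e \<le> (z - x) / d"
proof -
  have "(y - x) / e \<le> (z - x) / e"
    using assms by (simp add: divide_right_mono)
  also have "\<dots> \<le> (z - x) / d"
    using assms by (intro divide_left_mono) auto
  finally show ?thesis .
qed

lemma slope_proper_pred_of_left_neighbour:
  assumes "i < j" "j < length a" "RL a i = RL a j"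
    and "slope_proper_pred s a k' j" "k' < i"
  shows "slope_proper_pred s a k' i"
proof -
  have j: "a ! k' \<le> a ! j" "RL a k' = RL a j - 1" "nonblack s a k'"
    "s \<le> (a ! j - a ! k') / (real j - real k')"
    using assms(4) unfolding slope_proper_pred_def predecessor_def compatible_def by auto
  have ji: "a ! j < a ! i"
    using same_level_decreasing assms(1-3) .
  then have "(a ! j - a ! k') / (real j - real k') \<le> (a ! i - a ! k') / (real i - real k')"
    using assms(1,5) j(1) by (intro chord_slope_le) auto
  with j ji assms show ?thesis
    unfolding slope_proper_pred_def predecessor_def compatible_def by auto
qed

theorem mainTheorem12:
  fixes s :: real and a :: "real list" and t i j k :: nat
  assumes "s \<ge> 0"
    and "i \<in> hlist a (t + 1)" and "j \<in> hlist a (t + 1)" and "i < j"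
    and "k \<in> hlist a t"
    and "slope_proper_pred s a k i"
    and "\<forall>k'. slope_proper_pred s a k' i \<longrightarrow> k \<le> k'"
  shows "(\<forall>k'. slope_proper_pred s a k' j \<longrightarrow> k' = k \<or> k < k')
       \<and> ((\<exists>k'. slope_proper_pred s a k' j) \<longrightarrow> k \<le> (LEAST k'. slope_proper_pred s a k' j))"
proof -
  have "j < length a" "RL a i = RL a j"
    using assms(2,3) by (auto simp: hlist_def)
  have "k < i"
    using assms(6) by (simp add: slope_proper_pred_def predecessor_def compatible_def)
  have right_of_k: "k \<le> k'" if "slope_proper_pred s a k' j" for k'
  proof (rule ccontr)
    assume "\<not> k \<le> k'"
    with \<open>k < i\<close> have "slope_proper_pred s a k' i"
      using slope_proper_pred_of_left_neighbour[OF assms(4) _ _ that] \<open>j < length a\<close>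
        \<open>RL a i = RL a j\<close> by simp
    with assms(7) \<open>\<not> k \<le> k'\<close> show False by blast
  qed
  moreover have "k \<le> (LEAST k'. slope_proper_pred s a k' j)"
    if "\<exists>k'. slope_proper_pred s a k' j"
    using that by (rule LeastI2_ex) (rule right_of_k)
  ultimately show ?thesis by (auto simp: le_less)
qed

end
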